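(* rATL is strictly more expressive than ATL, in the following sense: (i) for every ATL formula $\varphi$ there is an rATL formula $\varphi^\star$ such that for every concurrent game structure $\mathcal{S}$ and every state $s$, $V(s,\varphi^\star)=1111$ iff $\mathcal{S},s\models\varphi$; and (ii) there exist an rATL formula $\psi$ and a truth value $u\in\mathbb{B}_4$ (e.g. $\psi=\langle\!\langle A\rangle\!\rangle\dot\Box p$ and $u=0011$) such that there is no ATL formula $\chi$ with $\mathcal{S},s\models\chi\iff V(s,\psi)\succeq u$ for all concurrent game structures $\mathcal{S}$ and states $s$.
   Context: Fix a finite set $\mathrm{AP}$ of atomic propositions. A concurrent game structure (CGS) is a tuple $\mathcal{S}=(St,Ag,Ac,\delta,\ell)$ where $St$ is a finite set of states, $Ag$ a finite set of agents, $Ac$ a finite set of actions, $\ell:St\to 2^{\mathrm{AP}}$ a labeling, and $\delta:St\times AV\to St$ a transition function, where $AV$ is the set of action vectors for $Ag$ (an action vector for $A\subseteq Ag$ is a map $A\to Ac$). A state $s'$ is a successor of $s$ if $s'=\delta(s,v)$ for some $v\in AV$. A path is an infinite sequence $\pi=s_0s_1s_2\cdots$ of states with $s_{n+1}$ a successor of $s_n$ for all $n$; write $\pi[n]=s_n$. A strategy for an agent is a function $f:St^+\to Ac$. For $A\subseteq Ag$ and a set $F_A=\{f_a\mid a\in A\}$ of strategies, one for each agent in $A$, $out(s,F_A)$ is the set of paths $s_0s_1\cdots$ with $s_0=s$ such that for every $n\ge 0$ there is $v\in AV$ with $v(a)=f_a(s_0\cdots s_n)$ for all $a\in A$ and $s_{n+1}=\delta(s_n,v)$.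 $\mathbb{B}_4=\{1111,0111,0011,0001,0000\}$ is totally ordered by $1111\succ0111\succ0011\succ0001\succ0000$; for $b=b_1b_2b_3b_4\in\mathbb{B}_4$ and $k\in\{1,2,3,4\}$, $b[k]=b_k$; max and min on $\mathbb{B}_4$ refer to this order, and on bits to $0<1$. rATL formulas: state formulas $\varphi ::= p \mid \neg\varphi\mid\varphi\vee\varphi\mid\varphi\wedge\varphi\mid\varphi\to\varphi\mid\langle\!\langle A\rangle\!\rangle\Phi\mid[\![A]\!]\Phi$ and path formulas $\Phi::=\dot{\bigcirc}\varphi\mid\dot\Diamond\varphi\mid\dot\Box\varphi$, with $p\in\mathrm{AP}$ and $A$ a set of agents; an rATL formula is a state formula. On a CGS the valuation $V$ maps (state, state formula) and (path, path formula) pairs to $\mathbb{B}_4$: $V(s,p)=1111$ if $p\in\ell(s)$ and $0000$ otherwise; $V(s,\varphi_1\vee\varphi_2)=\max(V(s,\varphi_1),V(s,\varphi_2))$; $V(s,\varphi_1\wedge\varphi_2)=\min(V(s,\varphi_1),V(s,\varphi_2))$; $V(s,\neg\varphi)=0000$ if $V(s,\varphi)=1111$ and $1111$ otherwise; $V(s,\varphi_1\to\varphi_2)=1111$ if $V(s,\varphi_1)\preceq V(s,\varphi_2)$ and $V(s,\varphi_2)$ otherwise; $V(s,\langle\!\langle A\rangle\!\rangle\Phi)$ is the maximal $b\in\mathbb{B}_4$ such that there is a set $F_A$ of strategies (one per agent in $A$) with $V(\pi,\Phi)\succeq b$ for all $\pi\in out(s,F_A)$; $V(s,[\![A]\!]\Phi)$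 is the maximal $b\in\mathbb{B}_4$ such that for every such $F_A$ there is $\pi\in out(s,F_A)$ with $V(\pi,\Phi)\succeq b$. For paths: $V(\pi,\dot\bigcirc\varphi)[k]=V(\pi[1],\varphi)[k]$; $V(\pi,\dot\Diamond\varphi)[k]=\max_{i\ge0}V(\pi[i],\varphi)[k]$; $V(\pi,\dot\Box\varphi)=b_1b_2b_3b_4$ with $b_1=\min_{i\ge0}V(\pi[i],\varphi)[1]$, $b_2=\max_{i\ge0}\min_{j\ge i}V(\pi[j],\varphi)[2]$, $b_3=\min_{i\ge0}\max_{j\ge i}V(\pi[j],\varphi)[3]$, $b_4=\max_{i\ge0}V(\pi[i],\varphi)[4]$. ATL formulas: state formulas $\varphi::=p\mid\neg\varphi\mid\varphi\vee\varphi\mid\varphi\wedge\varphi\mid\varphi\to\varphi\mid\langle\!\langle A\rangle\!\rangle\Phi\mid[\![A]\!]\Phi$ and path formulas $\Phi::=\bigcirc\varphi\mid\Diamond\varphi\mid\Box\varphi$, with the standard Boolean semantics: $\mathcal{S},s\models p$ iff $p\in\ell(s)$; Boolean connectives as usual; $\mathcal{S},s\models\langle\!\langle A\rangle\!\rangle\Phi$ iff there is a set $F_A$ of strategies (one per agent in $A$) with $\mathcal{S},\pi\models\Phi$ for all $\pi\in out(s,F_A)$; $\mathcal{S},s\models[\![A]\!]\Phi$ iff for every such $F_A$ some $\pi\in out(s,F_A)$ satisfies $\mathcal{S},\pi\models\Phi$; $\mathcal{S},\pi\models\bigcirc\varphi$ iff $\mathcal{S},\pi[1]\models\varphi$; $\mathcal{S},\pi\models\Diamond\varphi$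 iff $\mathcal{S},\pi[i]\models\varphi$ for some $i\ge0$; $\mathcal{S},\pi\models\Box\varphi$ iff $\mathcal{S},\pi[i]\models\varphi$ for all $i\ge0$. *)

theory Defs
  imports Main "HOL-Library.FuncSet"
begin

datatype b4 = B0000 | B0001 | B0011 | B0111 | B1111

fun b4_rank :: "b4 \<Rightarrow> nat" where
  "b4_rank B0000 = 0" | "b4_rank B0001 = 1" | "b4_rank B0011 = 2"
| "b4_rank B0111 = 3" | "b4_rank B1111 = 4"

lemma b4_rank_inj: "b4_rank x = b4_rank y \<Longrightarrow> x = y"
  by (cases x; cases y; simp)

instantiation b4 :: linorder
begin
definition less_eq_b4 :: "b4 \<Rightarrow> b4 \<Rightarrow> bool" where
  "less_eq_b4 x y \<longleftrightarrow> b4_rank x \<le> b4_rank y"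
definition less_b4 :: "b4 \<Rightarrow> b4 \<Rightarrow> bool" where
  "less_b4 x y \<longleftrightarrow> b4_rank x < b4_rank y"
instance
  by standard (auto simp: less_eq_b4_def less_b4_def intro: b4_rank_inj)
end

text \<open>The k-th bit (k in 1..4) of a truth value, b[k].\<close>
definition bit4 :: "b4 \<Rightarrow> nat \<Rightarrow> bool" where
  "bit4 b k \<longleftrightarrow> 5 - k \<le> b4_rank b"

text \<open>Assemble a truth value b1 b2 b3 b4 from its bits (used for monotone
  bit vectors b1 <= b2 <= b3 <= b4, which are exactly the elements of B4).\<close>
definition from_bits :: "(nat \<Rightarrow> bool) \<Rightarrow> b4" where
  "from_bits f = (if f 1 then B1111 else if f 2 then B0111 else if f 3 then B0011
                  else if f 4 then B0001 else B0000)"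

text \<open>States and actions are natural numbers (every finite CGS is isomorphic
  to one of this form); agents have an arbitrary type; 'ap is the finite set AP.\<close>
record ('ag, 'ap) cgs =
  St :: "nat set"
  Ag :: "'ag set"
  Ac :: "nat set"
  delta :: "nat \<Rightarrow> ('ag \<Rightarrow> nat) \<Rightarrow> nat"
  lab :: "nat \<Rightarrow> 'ap set"

definition AV :: "('ag, 'ap) cgs \<Rightarrow> ('ag \<Rightarrow> nat) set" where
  "AV S = PiE (Ag S) (\<lambda>_. Ac S)"

definition is_cgs :: "('ag, 'ap) cgs \<Rightarrow> bool" where
  "is_cgs S \<longleftrightarrow> finite (St S) \<and> St S \<noteq> {} \<and> finite (Ag S) \<and> finite (Ac S) \<and> Ac S \<noteq> {}
     \<and> (\<forall>s\<in>St S. \<forall>v\<in>AV S. delta S s v \<in> St S)"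

text \<open>A strategy profile for coalition A: F a is the strategy of agent a,
  a map from histories (nonempty state sequences) to actions.\<close>
definition strats :: "('ag, 'ap) cgs \<Rightarrow> 'ag set \<Rightarrow> ('ag \<Rightarrow> nat list \<Rightarrow> nat) \<Rightarrow> bool" where
  "strats S A F \<longleftrightarrow> (\<forall>a\<in>A. \<forall>h. F a h \<in> Ac S)"

definition out :: "('ag, 'ap) cgs \<Rightarrow> nat \<Rightarrow> 'ag set \<Rightarrow> ('ag \<Rightarrow> nat list \<Rightarrow> nat)
                    \<Rightarrow> (nat \<Rightarrow> nat) set" where
  "out S s A F = {\<pi>. \<pi> 0 = s \<and>
     (\<forall>n. \<exists>v\<in>AV S. (\<forall>a\<in>A \<inter> Ag S. v a = F a (map \<pi> [0..<Suc n]))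
                  \<and> \<pi> (Suc n) = delta S (\<pi> n) v)}"

datatype ('ag, 'ap) rsf =
    RProp 'ap | RNeg "('ag, 'ap) rsf" | ROr "('ag, 'ap) rsf" "('ag, 'ap) rsf"
  | RAnd "('ag, 'ap) rsf" "('ag, 'ap) rsf" | RImp "('ag, 'ap) rsf" "('ag, 'ap) rsf"
  | RDia "'ag set" "('ag, 'ap) rpf" | RBox "'ag set" "('ag, 'ap) rpf"
and ('ag, 'ap) rpf = RNext "('ag, 'ap) rsf" | REv "('ag, 'ap) rsf" | RAlw "('ag, 'ap) rsf"

primrec V :: "('ag, 'ap) cgs \<Rightarrow> nat \<Rightarrow> ('ag, 'ap) rsf \<Rightarrow> b4"
  and VP :: "('ag, 'ap) cgs \<Rightarrow> (nat \<Rightarrow> nat) \<Rightarrow> ('ag, 'ap) rpf \<Rightarrow> b4" where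
  "V S s (RProp p) = (if p \<in> lab S s then B1111 else B0000)"
| "V S s (RNeg \<phi>) = (if V S s \<phi> = B1111 then B0000 else B1111)"
| "V S s (ROr \<phi> \<psi>) = max (V S s \<phi>) (V S s \<psi>)"
| "V S s (RAnd \<phi> \<psi>) = min (V S s \<phi>) (V S s \<psi>)"
| "V S s (RImp \<phi> \<psi>) = (if V S s \<phi> \<le> V S s \<psi> then B1111 else V S s \<psi>)"
| "V S s (RDia A \<Phi>) =
     (GREATEST b. \<exists>F. strats S A F \<and> (\<forall>\<pi>\<in>out S s A F. b \<le> VP S \<pi> \<Phi>))"
| "V S s (RBox A \<Phi>) =
     (GREATEST b. \<forall>F. strats S A F \<longrightarrow> (\<exists>\<pi>\<in>out S s A F. b \<le> VP S \<pi> \<Phi>))"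
| "VP S \<pi> (RNext \<phi>) = from_bits (\<lambda>k. bit4 (V S (\<pi> 1) \<phi>) k)"
| "VP S \<pi> (REv \<phi>) = from_bits (\<lambda>k. \<exists>i. bit4 (V S (\<pi> i) \<phi>) k)"
| "VP S \<pi> (RAlw \<phi>) = from_bits (\<lambda>k.
      if k = 1 then (\<forall>i. bit4 (V S (\<pi> i) \<phi>) 1)
      else if k = 2 then (\<exists>i. \<forall>j\<ge>i. bit4 (V S (\<pi> j) \<phi>) 2)
      else if k = 3 then (\<forall>i. \<exists>j\<ge>i. bit4 (V S (\<pi> j) \<phi>) 3)
      else (\<exists>i. bit4 (V S (\<pi> i) \<phi>) 4))"

datatype ('ag, 'ap) asf =
    AProp 'ap | ANeg "('ag, 'ap) asf" | AOr "('ag, 'ap) asf" "('ag, 'ap) asf"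
  | AAnd "('ag, 'ap) asf" "('ag, 'ap) asf" | AImp "('ag, 'ap) asf" "('ag, 'ap) asf"
  | ADia "'ag set" "('ag, 'ap) apf" | ABox "'ag set" "('ag, 'ap) apf"
and ('ag, 'ap) apf = ANext "('ag, 'ap) asf" | AEv "('ag, 'ap) asf" | AAlw "('ag, 'ap) asf"

primrec sat :: "('ag, 'ap) cgs \<Rightarrow> nat \<Rightarrow> ('ag, 'ap) asf \<Rightarrow> bool"
  and satp :: "('ag, 'ap) cgs \<Rightarrow> (nat \<Rightarrow> nat) \<Rightarrow> ('ag, 'ap) apf \<Rightarrow> bool" where
  "sat S s (AProp p) \<longleftrightarrow> p \<in> lab S s"
| "sat S s (ANeg \<phi>) \<longleftrightarrow> \<not> sat S s \<phi>"
| "sat S s (AOr \<phi> \<psi>) \<longleftrightarrow> sat S s \<phi> \<or> sat S s \<psi>"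
| "sat S s (AAnd \<phi> \<psi>) \<longleftrightarrow> sat S s \<phi> \<and> sat S s \<psi>"
| "sat S s (AImp \<phi> \<psi>) \<longleftrightarrow> (sat S s \<phi> \<longrightarrow> sat S s \<psi>)"
| "sat S s (ADia A \<Phi>) \<longleftrightarrow> (\<exists>F. strats S A F \<and> (\<forall>\<pi>\<in>out S s A F. satp S \<pi> \<Phi>))"
| "sat S s (ABox A \<Phi>) \<longleftrightarrow> (\<forall>F. strats S A F \<longrightarrow> (\<exists>\<pi>\<in>out S s A F. satp S \<pi> \<Phi>))"
| "satp S \<pi> (ANext \<phi>) \<longleftrightarrow> sat S (\<pi> 1) \<phi>"
| "satp S \<pi> (AEv \<phi>) \<longleftrightarrow> (\<exists>i. sat S (\<pi> i) \<phi>)"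
| "satp S \<pi> (AAlw \<phi>) \<longleftrightarrow> (\<forall>i. sat S (\<pi> i) \<phi>)"

end

theory Submission
  imports Defs
begin

(* Part (i): read an ATL formula as true when its translation has value 1111. Boolean
   connectives carry over (implication becomes a disjunction, since the rATL implication is
   not Boolean), <<A>> becomes the strategic rATL operator, and [[A]]Phi becomes the negation
   of <<A>> applied to the dual of Phi.

   Part (ii): psi = <<a>> dotted-box p has value at least 0011 iff some outcome visits p
   infinitely often. In the one-agent "ladder" structures M_n (states 0..2n+1, p holds at the
   even states) this is true at state 0 but false at state 2n, from which every run ends in
   an odd self-loop. But every ATL formula chi has a level N such that, in every M_n, the
   states 2i and 2i+1 with N <= i <= n satisfy chi exactly when 0 and 1 do: atoms and Boolean
   connectives preserve this, and each temporal operator raises N by one. In M_(N+1), chi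
   therefore cannot separate 0 from 2(N+1). *)

lemma b4_UNIV: "(UNIV :: b4 set) = {B0000, B0001, B0011, B0111, B1111}"
  using b4.exhaust by blast

lemma top_le_b4_iff: "B1111 \<le> x \<longleftrightarrow> x = B1111"
  by (cases x) (auto simp: less_eq_b4_def)

lemma bot_le_b4: "B0000 \<le> x"
  by (cases x) (auto simp: less_eq_b4_def)

lemma max_b4_eq_top_iff: "max x y = B1111 \<longleftrightarrow> x = B1111 \<or> y = B1111"
  by (cases x; cases y) (auto simp: max_def less_eq_b4_def)

lemma min_b4_eq_top_iff: "min x y = B1111 \<longleftrightarrow> x = B1111 \<and> y = B1111"
  by (cases x; cases y) (auto simp: min_def less_eq_b4_def)

lemma bit4_1_iff [simp]: "bit4 b (Suc 0) \<longleftrightarrow> b = B1111"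
  by (cases b) (auto simp: bit4_def)

lemma from_bits_eq_top_iff [simp]: "from_bits f = B1111 \<longleftrightarrow> f 1"
  by (auto simp: from_bits_def)

lemma le_Greatest_b4_iff:
  fixes P :: "b4 \<Rightarrow> bool"
  assumes "P B0000" and down: "\<And>b c. P b \<Longrightarrow> c \<le> b \<Longrightarrow> P c"
  shows "u \<le> Greatest P \<longleftrightarrow> P u"
proof -
  have fin: "finite {b. P b}" and ne: "{b. P b} \<noteq> {}"
    using \<open>P B0000\<close> by (auto simp: b4_UNIV intro: finite_subset)
  have "Greatest P = Max {b. P b}"
    using Max_in[OF fin ne] Max_ge[OF fin] by (intro Greatest_equality) auto
  then show ?thesis
    using Max_ge_iff[OF fin ne] down by auto
qed

lemma strats_exist: "is_cgs S \<Longrightarrow> \<exists>F. strats S A F"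
proof -
  assume "is_cgs S"
  then obtain c where "c \<in> Ac S" unfolding is_cgs_def by blast
  then show ?thesis unfolding strats_def by (intro exI[of _ "\<lambda>_ _. c"]) simp
qed

lemma le_V_RDia_iff:
  assumes "is_cgs S"
  shows "u \<le> V S s (RDia A \<Phi>) \<longleftrightarrow> (\<exists>F. strats S A F \<and> (\<forall>\<pi>\<in>out S s A F. u \<le> VP S \<pi> \<Phi>))"
  unfolding V.simps
  by (rule le_Greatest_b4_iff) (use strats_exist[OF assms] bot_le_b4 order_trans in blast)+

lemma V_RDia_eq_top_iff:
  assumes "is_cgs S"
  shows "V S s (RDia A \<Phi>) = B1111 \<longleftrightarrow>
    (\<exists>F. strats S A F \<and> (\<forall>\<pi>\<in>out S s A F. VP S \<pi> \<Phi> = B1111))"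
  using le_V_RDia_iff[OF assms, of B1111] by (simp add: top_le_b4_iff)

lemma out_nonempty:
  assumes "is_cgs S" "strats S A F"
  shows "out S s A F \<noteq> {}"
proof -
  obtain c where c: "c \<in> Ac S" using assms(1) unfolding is_cgs_def by blast
  define act where "act h = (\<lambda>a. if a \<in> Ag S then if a \<in> A then F a h else c else undefined)" for h
  define hist where "hist n = ((\<lambda>h. h @ [delta S (last h) (act h)]) ^^ n) [s]" for n
  define \<pi> where "\<pi> n = last (hist n)" for n
  have act_AV: "act h \<in> AV S" for h
    using c assms(2) unfolding AV_def act_def strats_def by auto
  have hist_Suc: "hist (Suc n) = hist n @ [delta S (\<pi> n) (act (hist n))]" for n
    by (simp add: hist_def \<pi>_def)
  have hist_eq: "hist n = map \<pi> [0..<Suc n]" for n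
    by (induction n) (simp_all add: hist_def \<pi>_def hist_Suc)
  have "\<pi> 0 = s" by (simp add: hist_def \<pi>_def)
  moreover have "\<pi> (Suc n) = delta S (\<pi> n) (act (hist n))" for n
    by (simp add: \<pi>_def hist_Suc)
  ultimately have "\<pi> \<in> out S s A F"
    unfolding out_def using act_AV by (auto simp: act_def hist_eq intro!: bexI[OF _ act_AV])
  then show ?thesis by blast
qed

text \<open>trp \<Phi> is the pair of translations of \<Phi> and of its negation; the latter is what
  [[A]]\<Phi> = \<not>\<langle>\<langle>A\<rangle>\<rangle>\<not>\<Phi> needs.\<close>
fun tr :: "('ag, 'ap) asf \<Rightarrow> ('ag, 'ap) rsf"
  and trp :: "('ag, 'ap) apf \<Rightarrow> ('ag, 'ap) rpf \<times> ('ag, 'ap) rpf" where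
  "tr (AProp p) = RProp p"
| "tr (ANeg \<phi>) = RNeg (tr \<phi>)"
| "tr (AOr \<phi> \<psi>) = ROr (tr \<phi>) (tr \<psi>)"
| "tr (AAnd \<phi> \<psi>) = RAnd (tr \<phi>) (tr \<psi>)"
| "tr (AImp \<phi> \<psi>) = ROr (RNeg (tr \<phi>)) (tr \<psi>)"
| "tr (ADia A \<Phi>) = RDia A (fst (trp \<Phi>))"
| "tr (ABox A \<Phi>) = RNeg (RDia A (snd (trp \<Phi>)))"
| "trp (ANext \<phi>) = (RNext (tr \<phi>), RNext (RNeg (tr \<phi>)))"
| "trp (AEv \<phi>) = (REv (tr \<phi>), RAlw (RNeg (tr \<phi>)))"
| "trp (AAlw \<phi>) = (RAlw (tr \<phi>), REv (RNeg (tr \<phi>)))"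

lemma tr_trp_correct:
  assumes "is_cgs S"
  shows "(\<forall>s. V S s (tr \<phi>) = B1111 \<longleftrightarrow> sat S s \<phi>)
    \<and> (\<forall>\<pi>. (VP S \<pi> (fst (trp \<Phi>)) = B1111 \<longleftrightarrow> satp S \<pi> \<Phi>)
           \<and> (VP S \<pi> (snd (trp \<Phi>)) = B1111 \<longleftrightarrow> \<not> satp S \<pi> \<Phi>))"
  by (induction rule: asf_apf.induct)
    (simp_all add: max_b4_eq_top_iff min_b4_eq_top_iff V_RDia_eq_top_iff[OF assms]
      del: V.simps(6))

locale transition_system =
  fixes m :: nat and R :: "nat \<Rightarrow> nat \<Rightarrow> bool"
  assumes serial: "\<exists>t. R s t"
    and closed: "R s t \<Longrightarrow> s \<le> m \<Longrightarrow> t \<le> m"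
begin

definition runs :: "nat \<Rightarrow> (nat \<Rightarrow> nat) set" where
  "runs s = {\<pi>. \<pi> 0 = s \<and> (\<forall>k. R (\<pi> k) (\<pi> (Suc k)))}"

text \<open>Agent a picks the successor state; a choice that is not an R-successor is overridden
  by an arbitrary one, so that the outcomes are exactly the R-runs.\<close>
definition choice_cgs :: "'ag \<Rightarrow> (nat \<Rightarrow> 'ap set) \<Rightarrow> ('ag, 'ap) cgs" where
  "choice_cgs a L = \<lparr>St = {..m}, Ag = {a}, Ac = {..m},
     delta = (\<lambda>s v. if R s (v a) then v a else SOME t. R s t), lab = L\<rparr>"

lemma choice_cgs_simps [simp]:
  "St (choice_cgs a L) = {..m}" "Ag (choice_cgs a L) = {a}" "Ac (choice_cgs a L) = {..m}"
  "lab (choice_cgs a L) = L"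
  by (simp_all add: choice_cgs_def)

lemma R_delta: "R s (delta (choice_cgs a L) s v)"
  unfolding choice_cgs_def using someI_ex[OF serial] by auto

lemma is_cgs_choice_cgs: "is_cgs (choice_cgs a L)"
proof -
  have "delta (choice_cgs a L) s v \<le> m" if "s \<le> m" for s v
    using closed[OF R_delta that] .
  then show ?thesis by (simp add: is_cgs_def)
qed

lemma runs_closed: "\<pi> \<in> runs s \<Longrightarrow> s \<le> m \<Longrightarrow> \<pi> k \<le> m"
  unfolding runs_def by (induction k) (auto dest: closed)

lemma rtranclp_closed: "R\<^sup>*\<^sup>* s t \<Longrightarrow> s \<le> m \<Longrightarrow> t \<le> m"
  by (induction rule: rtranclp_induct) (auto dest: closed)

lemma out_subset_runs: "out (choice_cgs a L) s A F \<subseteq> runs s"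
proof
  fix \<pi> assume \<pi>: "\<pi> \<in> out (choice_cgs a L) s A F"
  have "R (\<pi> k) (\<pi> (Suc k))" for k
  proof -
    obtain v where "\<pi> (Suc k) = delta (choice_cgs a L) (\<pi> k) v"
      using \<pi> unfolding out_def by blast
    then show ?thesis using R_delta by simp
  qed
  with \<pi> show "\<pi> \<in> runs s" by (simp add: out_def runs_def)
qed

lemma run_in_out:
  assumes \<pi>: "\<pi> \<in> runs s" "s \<le> m"
    and F: "\<And>k. a \<in> A \<Longrightarrow> F a (map \<pi> [0..<Suc k]) = \<pi> (Suc k)"
  shows "\<pi> \<in> out (choice_cgs a L) s A F"
  unfolding out_def
proof (intro CollectI conjI allI)
  show "\<pi> 0 = s" using \<pi> by (simp add: runs_def)
  fix k
  define v where "v b = (if b = a then \<pi> (Suc k) else undefined)" for b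
  have "v \<in> AV (choice_cgs a L)"
    using runs_closed[OF \<pi>] by (auto simp: v_def AV_def choice_cgs_def PiE_def extensional_def)
  moreover have "\<pi> (Suc k) = delta (choice_cgs a L) (\<pi> k) v"
    using \<pi>(1) by (simp add: v_def runs_def choice_cgs_def)
  moreover have "\<forall>b\<in>A \<inter> Ag (choice_cgs a L). v b = F b (map \<pi> [0..<Suc k])"
    using F by (auto simp: v_def choice_cgs_def)
  ultimately show "\<exists>v\<in>AV (choice_cgs a L).
      (\<forall>b\<in>A \<inter> Ag (choice_cgs a L). v b = F b (map \<pi> [0..<Suc k]))
      \<and> \<pi> (Suc k) = delta (choice_cgs a L) (\<pi> k) v"
    by blast
qed

definition follow :: "(nat \<Rightarrow> nat) \<Rightarrow> 'ag \<Rightarrow> nat list \<Rightarrow> nat" where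
  "follow \<pi> b h = \<pi> (length h)"

lemma strats_follow: "\<pi> \<in> runs s \<Longrightarrow> s \<le> m \<Longrightarrow> strats (choice_cgs a L) A (follow \<pi>)"
  using runs_closed by (simp add: strats_def follow_def choice_cgs_def)

lemma out_follow:
  assumes \<pi>: "\<pi> \<in> runs s" "s \<le> m" and "a \<in> A"
  shows "out (choice_cgs a L) s A (follow \<pi>) = {\<pi>}"
proof
  show "{\<pi>} \<subseteq> out (choice_cgs a L) s A (follow \<pi>)"
    using run_in_out[OF \<pi>, of a A "follow \<pi>"] by (simp add: follow_def)
  show "out (choice_cgs a L) s A (follow \<pi>) \<subseteq> {\<pi>}"
  proof
    fix \<rho> assume \<rho>: "\<rho> \<in> out (choice_cgs a L) s A (follow \<pi>)"
    have "\<rho> k = \<pi> k" for k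
    proof (induction k)
      case 0
      then show ?case using \<rho> \<pi>(1) by (simp add: out_def runs_def)
    next
      case (Suc k)
      obtain v where "\<forall>b\<in>A \<inter> {a}. v b = follow \<pi> b (map \<rho> [0..<Suc k])"
        and \<rho>_Suc: "\<rho> (Suc k) = delta (choice_cgs a L) (\<rho> k) v"
        using \<rho> unfolding out_def choice_cgs_simps by blast
      then have "v a = \<pi> (Suc k)" using \<open>a \<in> A\<close> by (simp add: follow_def)
      with \<rho>_Suc Suc \<pi>(1) show ?case by (simp add: runs_def choice_cgs_def)
    qed
    then show "\<rho> \<in> {\<pi>}" by auto
  qed
qed

lemma out_uncontrolled: "a \<notin> A \<Longrightarrow> s \<le> m \<Longrightarrow> out (choice_cgs a L) s A F = runs s"
  using out_subset_runs run_in_out by (metis subsetI subset_antisym)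

lemma ex_strategy_all_out_iff:
  assumes "s \<le> m"
  shows "(\<exists>F. strats (choice_cgs a L) A F \<and> (\<forall>\<pi>\<in>out (choice_cgs a L) s A F. P \<pi>))
    \<longleftrightarrow> (if a \<in> A then \<exists>\<pi>\<in>runs s. P \<pi> else \<forall>\<pi>\<in>runs s. P \<pi>)"
proof (cases "a \<in> A")
  case True
  have "(\<exists>F. strats (choice_cgs a L) A F \<and> (\<forall>\<pi>\<in>out (choice_cgs a L) s A F. P \<pi>))
    \<longleftrightarrow> (\<exists>\<pi>\<in>runs s. P \<pi>)"
  proof
    assume "\<exists>F. strats (choice_cgs a L) A F \<and> (\<forall>\<pi>\<in>out (choice_cgs a L) s A F. P \<pi>)"
    then obtain F where F: "strats (choice_cgs a L) A F" "\<forall>\<pi>\<in>out (choice_cgs a L) s A F. P \<pi>"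
      by blast
    obtain \<pi> where \<pi>: "\<pi> \<in> out (choice_cgs a L) s A F"
      using out_nonempty[OF is_cgs_choice_cgs F(1)] by blast
    then have "\<pi> \<in> runs s" by (rule subsetD[OF out_subset_runs])
    with F(2) \<pi> show "\<exists>\<pi>\<in>runs s. P \<pi>" by blast
  next
    assume "\<exists>\<pi>\<in>runs s. P \<pi>"
    then obtain \<pi> where \<pi>: "\<pi> \<in> runs s" and "P \<pi>" by blast
    have "strats (choice_cgs a L) A (follow \<pi>)"
      using \<pi> assms by (rule strats_follow)
    moreover have "out (choice_cgs a L) s A (follow \<pi>) = {\<pi>}"
      using \<pi> assms True by (rule out_follow)
    ultimately show "\<exists>F. strats (choice_cgs a L) A F \<and> (\<forall>\<pi>\<in>out (choice_cgs a L) s A F. P \<pi>)"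
      using \<open>P \<pi>\<close> by auto
  qed
  with True show ?thesis by simp
next
  case False
  then have "out (choice_cgs a L) s A F = runs s" for F
    using assms by (rule out_uncontrolled)
  with False show ?thesis using strats_exist[OF is_cgs_choice_cgs, of a L A] by simp
qed

lemma all_strategy_ex_out_iff:
  assumes "s \<le> m"
  shows "(\<forall>F. strats (choice_cgs a L) A F \<longrightarrow> (\<exists>\<pi>\<in>out (choice_cgs a L) s A F. P \<pi>))
    \<longleftrightarrow> (if a \<in> A then \<forall>\<pi>\<in>runs s. P \<pi> else \<exists>\<pi>\<in>runs s. P \<pi>)"
proof -
  have "(\<forall>F. strats (choice_cgs a L) A F \<longrightarrow> (\<exists>\<pi>\<in>out (choice_cgs a L) s A F. P \<pi>))
    \<longleftrightarrow> \<not> (\<exists>F. strats (choice_cgs a L) A F \<and> (\<forall>\<pi>\<in>out (choice_cgs a L) s A F. \<not> P \<pi>))"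
    by blast
  then show ?thesis by (simp only: ex_strategy_all_out_iff[OF assms]) simp
qed

lemma runs_nonempty: "runs s \<noteq> {}"
proof -
  have "(\<lambda>k. ((\<lambda>x. SOME y. R x y) ^^ k) s) \<in> runs s"
    unfolding runs_def using someI_ex[OF serial] by simp
  then show ?thesis by blast
qed

lemma run_Cons: "R s t \<Longrightarrow> \<pi> \<in> runs t \<Longrightarrow> case_nat s \<pi> \<in> runs s"
  unfolding runs_def by (auto split: nat.split)

lemma ex_run_next_iff: "(\<exists>\<pi>\<in>runs s. T (\<pi> 1)) \<longleftrightarrow> (\<exists>t. R s t \<and> T t)"
proof
  assume "\<exists>t. R s t \<and> T t"
  then obtain t \<pi> where "R s t" "T t" "\<pi> \<in> runs t"
    using runs_nonempty by blast
  then show "\<exists>\<pi>\<in>runs s. T (\<pi> 1)"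
    using run_Cons by (intro bexI[of _ "case_nat s \<pi>"]) (auto simp: runs_def)
qed (auto simp: runs_def)

lemma all_run_next_iff: "(\<forall>\<pi>\<in>runs s. T (\<pi> 1)) \<longleftrightarrow> (\<forall>t. R s t \<longrightarrow> T t)"
  using ex_run_next_iff[of s "\<lambda>t. \<not> T t"] by blast

lemma ex_run_eventually_iff: "(\<exists>\<pi>\<in>runs s. \<exists>i. T (\<pi> i)) \<longleftrightarrow> (\<exists>t. R\<^sup>*\<^sup>* s t \<and> T t)"
proof
  assume "\<exists>\<pi>\<in>runs s. \<exists>i. T (\<pi> i)"
  then obtain \<pi> i where \<pi>: "\<pi> \<in> runs s" and "T (\<pi> i)" by blast
  have "R\<^sup>*\<^sup>* s (\<pi> i)"
  proof (induction i)
    case 0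
    then show ?case using \<pi> by (simp add: runs_def)
  next
    case (Suc i)
    moreover have "R (\<pi> i) (\<pi> (Suc i))" using \<pi> by (simp add: runs_def)
    ultimately show ?case by (rule rtranclp.rtrancl_into_rtrancl)
  qed
  with \<open>T (\<pi> i)\<close> show "\<exists>t. R\<^sup>*\<^sup>* s t \<and> T t" by blast
next
  assume "\<exists>t. R\<^sup>*\<^sup>* s t \<and> T t"
  then obtain t where "R\<^sup>*\<^sup>* s t" "T t" by blast
  have "\<exists>\<pi>\<in>runs s. \<exists>i. \<pi> i = t"
    using \<open>R\<^sup>*\<^sup>* s t\<close>
  proof (induction rule: converse_rtranclp_induct)
    case base
    obtain \<pi> where "\<pi> \<in> runs t" using runs_nonempty by blast
    moreover from this have "\<pi> 0 = t" by (simp add: runs_def)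
    ultimately show ?case by blast
  next
    case (step s u)
    then obtain \<pi> i where "\<pi> \<in> runs u" "\<pi> i = t" by blast
    then have "case_nat s \<pi> \<in> runs s" "case_nat s \<pi> (Suc i) = t"
      using run_Cons[OF step(1)] by simp_all
    then show ?case by blast
  qed
  with \<open>T t\<close> show "\<exists>\<pi>\<in>runs s. \<exists>i. T (\<pi> i)" by blast
qed

lemma all_run_always_iff: "(\<forall>\<pi>\<in>runs s. \<forall>i. T (\<pi> i)) \<longleftrightarrow> (\<forall>t. R\<^sup>*\<^sup>* s t \<longrightarrow> T t)"
  using ex_run_eventually_iff[of s "\<lambda>t. \<not> T t"] by blast

lemma sat_choice_cgs_ADia_iff:
  "s \<le> m \<Longrightarrow> sat (choice_cgs a L) s (ADia A \<Phi>) \<longleftrightarrow>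
    (if a \<in> A then \<exists>\<pi>\<in>runs s. satp (choice_cgs a L) \<pi> \<Phi> else \<forall>\<pi>\<in>runs s. satp (choice_cgs a L) \<pi> \<Phi>)"
  by (simp only: sat.simps ex_strategy_all_out_iff)

lemma sat_choice_cgs_ABox_iff:
  "s \<le> m \<Longrightarrow> sat (choice_cgs a L) s (ABox A \<Phi>) \<longleftrightarrow>
    (if a \<in> A then \<forall>\<pi>\<in>runs s. satp (choice_cgs a L) \<pi> \<Phi> else \<exists>\<pi>\<in>runs s. satp (choice_cgs a L) \<pi> \<Phi>)"
  by (simp only: sat.simps all_strategy_ex_out_iff)

end

text \<open>From 0 and 1 every state is reachable, from 2i+1 only 2i+1 itself and 2, ..., 2i-1:
  the only way up is the jump from 1 to 2n.\<close>
definition ladder :: "nat \<Rightarrow> nat \<Rightarrow> nat \<Rightarrow> bool" where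
  "ladder n s t \<longleftrightarrow> (even s \<and> t = Suc s)
     \<or> (odd s \<and> (t = s \<or> (s = 1 \<and> (t = 0 \<or> t = 2*n)) \<or> (5 \<le> s \<and> t = s - 3)))"

lemma ladder_even: "even s \<Longrightarrow> ladder n s t \<longleftrightarrow> t = Suc s"
  by (simp add: ladder_def)

lemma ladder_odd:
  "odd s \<Longrightarrow> ladder n s t \<longleftrightarrow> t = s \<or> (s = 1 \<and> (t = 0 \<or> t = 2*n)) \<or> (5 \<le> s \<and> t = s - 3)"
  by (simp add: ladder_def)

lemma transition_system_ladder: "transition_system (2*n+1) (ladder n)"
proof
  show "\<exists>t. ladder n s t" for s
    by (cases "even s") (auto simp: ladder_def)
  show "t \<le> 2*n+1" if "ladder n s t" "s \<le> 2*n+1" for s t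
    using that by (auto simp: ladder_def elim!: evenE)
qed

interpretation ladder: transition_system "2*n+1" "ladder n" for n
  by (rule transition_system_ladder)

text \<open>The agent and the proposition p are the arbitrary elements undefined of their types.\<close>
definition ladder_cgs :: "nat \<Rightarrow> ('ag, 'ap) cgs" where
  "ladder_cgs n = ladder.choice_cgs n undefined (\<lambda>s. if even s then {undefined} else {})"

lemma ladder_state_cases:
  fixes t n :: nat
  assumes "t \<le> 2*n+1"
  obtains "t = 0" | "t = 1" | j where "t = 2*j" "1 \<le> j" "j \<le> n"
    | j where "t = 2*j+1" "1 \<le> j" "j \<le> n"
proof -
  have "t = 2*(t div 2) \<or> t = 2*(t div 2)+1" by presburger
  moreover have "t div 2 \<le> n" using assms by linarith
  ultimately show thesis using that by (cases "t div 2 = 0") auto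
qed

lemma ladder_reach_odd_odd:
  assumes "1 \<le> j" "j \<le> i" shows "(ladder n)\<^sup>*\<^sup>* (2*i+1) (2*j+1)"
  using assms(2)
proof (induction i rule: dec_induct)
  case (step i)
  have "ladder n (2*Suc i+1) (2*i)" using step(1) assms(1) by (simp add: ladder_odd)
  moreover have "ladder n (2*i) (2*i+1)" by (simp add: ladder_even)
  ultimately show ?case using step(3) by (meson converse_rtranclp_into_rtranclp)
qed simp

lemma ladder_reach_odd_even:
  assumes "1 \<le> j" "j < i" shows "(ladder n)\<^sup>*\<^sup>* (2*i+1) (2*j)"
proof -
  have "(ladder n)\<^sup>*\<^sup>* (2*i+1) (2*Suc j+1)" using assms by (intro ladder_reach_odd_odd) auto
  moreover have "ladder n (2*Suc j+1) (2*j)" using assms by (simp add: ladder_odd)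
  ultimately show ?thesis by (rule rtranclp.rtrancl_into_rtrancl)
qed

lemma ladder_reach_from_bottom:
  assumes "1 \<le> n" "s \<le> 1" "t \<le> 2*n+1"
  shows "(ladder n)\<^sup>*\<^sup>* s t"
proof -
  have top: "(ladder n)\<^sup>*\<^sup>* 1 (2*n+1)"
    using ladder_even[of "2*n" n "2*n+1"] ladder_odd[of 1 n "2*n"] by auto
  have "(ladder n)\<^sup>*\<^sup>* 1 t"
    using assms(3)
  proof (cases rule: ladder_state_cases)
    case 1
    then show ?thesis by (simp add: ladder_odd r_into_rtranclp)
  next
    case (3 j)
    then show ?thesis
      using top ladder_reach_odd_even[of j n n] ladder_odd[of 1 n "2*n"]
      by (cases "j = n") (auto intro: rtranclp_trans)
  next
    case (4 j)
    then show ?thesis using top ladder_reach_odd_odd[of j n n] by (auto intro: rtranclp_trans)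
  qed simp
  moreover have "ladder n 0 1" by (simp add: ladder_even)
  ultimately show ?thesis using assms(2) by (cases s) auto
qed

definition agrees_above :: "nat \<Rightarrow> nat \<Rightarrow> (nat \<Rightarrow> bool) \<Rightarrow> bool" where
  "agrees_above N n T \<longleftrightarrow> (\<forall>i. N \<le> i \<longrightarrow> i \<le> n \<longrightarrow> T (2*i) = T 0 \<and> T (2*i+1) = T 1)"

definition ladder_stable :: "(nat \<Rightarrow> nat \<Rightarrow> bool) \<Rightarrow> bool" where
  "ladder_stable T \<longleftrightarrow> (\<exists>N. \<forall>n. agrees_above N n (T n))"

lemma agrees_above_mono: "agrees_above N n T \<Longrightarrow> N \<le> N' \<Longrightarrow> agrees_above N' n T"
  by (simp add: agrees_above_def)

lemma ladder_stable_cong: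
  assumes "ladder_stable T" and "\<And>n s. s \<le> 2*n+1 \<Longrightarrow> T n s = T' n s"
  shows "ladder_stable T'"
proof -
  have "agrees_above N n (T n) \<Longrightarrow> agrees_above N n (T' n)" for N n
    using assms(2)[of 0 n] assms(2)[of 1 n] assms(2)[of "2*_" n] assms(2)[of "2*_+1" n]
    by (simp add: agrees_above_def)
  with assms(1) show ?thesis unfolding ladder_stable_def by blast
qed

lemma ladder_stable_const: "ladder_stable (\<lambda>n s. P (even s))"
  unfolding ladder_stable_def agrees_above_def by simp

lemma ladder_stable_Not: "ladder_stable T \<Longrightarrow> ladder_stable (\<lambda>n s. \<not> T n s)"
  by (simp add: ladder_stable_def agrees_above_def)

lemma ladder_stable_binop:
  assumes "ladder_stable T" "ladder_stable T'"
  shows "ladder_stable (\<lambda>n s. f (T n s) (T' n s))"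
proof -
  obtain N N' where "\<forall>n. agrees_above N n (T n)" "\<forall>n. agrees_above N' n (T' n)"
    using assms unfolding ladder_stable_def by blast
  then have "agrees_above (max N N') n (T n)" "agrees_above (max N N') n (T' n)" for n
    using agrees_above_mono max.cobounded1 max.cobounded2 by blast+
  then have "agrees_above (max N N') n (\<lambda>s. f (T n s) (T' n s))" for n
    by (simp add: agrees_above_def)
  then show ?thesis unfolding ladder_stable_def by blast
qed

lemma agrees_above_EX:
  assumes T: "agrees_above N n T" and "1 \<le> N"
  shows "agrees_above (Suc N) n (\<lambda>s. \<exists>t. ladder n s t \<and> T t)"
  unfolding agrees_above_def
proof (intro allI impI)
  fix i assume i: "Suc N \<le> i" "i \<le> n"
  have "T (2*i) = T 0" "T (2*i+1) = T 1" "T (2*(i-1)) = T 0" "T (2*n) = T 0"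
    using T i unfolding agrees_above_def by auto
  moreover have "2*i+1-3 = 2*(i-1)" "5 \<le> 2*i+1" using i \<open>1 \<le> N\<close> by auto
  ultimately show "(\<exists>t. ladder n (2*i) t \<and> T t) = (\<exists>t. ladder n 0 t \<and> T t) \<and>
        (\<exists>t. ladder n (2*i+1) t \<and> T t) = (\<exists>t. ladder n 1 t \<and> T t)"
    by (auto simp: ladder_even ladder_odd)
qed

text \<open>Every state is matched, as far as T can tell, by a state reachable from 2i+1; states
  beyond 2i+1 are folded back onto 2i+1 and 2(i-1), which look like 1 and 0.\<close>
lemma agrees_above_reach_representative:
  assumes T: "agrees_above N n T" and "1 \<le> N" "N < i" "i \<le> n" "t \<le> 2*n+1"
  shows "\<exists>t'. (ladder n)\<^sup>*\<^sup>* (2*i+1) t' \<and> T t' = T t"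
proof -
  have T_even: "T (2*j) = T 0" and T_odd: "T (2*j+1) = T 1" if "N \<le> j" "j \<le> n" for j
    using T that unfolding agrees_above_def by auto
  have "(ladder n)\<^sup>*\<^sup>* (2*i+1) (2*(i-1))"
    using assms(2,3) by (intro ladder_reach_odd_even) auto
  moreover have "T (2*(i-1)) = T 0"
    using assms(3,4) by (intro T_even) auto
  ultimately have descend: "\<exists>t'. (ladder n)\<^sup>*\<^sup>* (2*i+1) t' \<and> T t' = T 0" by blast
  have stay: "(ladder n)\<^sup>*\<^sup>* (2*i+1) (2*i+1)" "T (2*i+1) = T 1"
    using assms(3,4) T_odd[of i] by auto
  from \<open>t \<le> 2*n+1\<close> show ?thesis
  proof (cases rule: ladder_state_cases)
    case 1
    then show ?thesis using descend by simp
  next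
    case 2
    then show ?thesis using stay by blast
  next
    case (3 j)
    show ?thesis
    proof (cases "j < i")
      case True
      then have "(ladder n)\<^sup>*\<^sup>* (2*i+1) t" using 3 ladder_reach_odd_even by simp
      then show ?thesis by blast
    next
      case False
      then have "T t = T 0" using 3 assms(3) T_even[of j] by simp
      with descend show ?thesis by simp
    qed
  next
    case (4 j)
    show ?thesis
    proof (cases "j \<le> i")
      case True
      then have "(ladder n)\<^sup>*\<^sup>* (2*i+1) t" using 4 ladder_reach_odd_odd by simp
      then show ?thesis by blast
    next
      case False
      then have "T t = T (2*i+1)" using 4 assms(3) T_odd[of j] stay(2) by simp
      with stay(1) show ?thesis by blast
    qed
  qed
qed

lemma agrees_above_EF:
  assumes T: "agrees_above N n T" and "1 \<le> N"
  shows "agrees_above (Suc N) n (\<lambda>s. \<exists>t. (ladder n)\<^sup>*\<^sup>* s t \<and> T t)"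
  unfolding agrees_above_def
proof (intro allI impI)
  fix i assume i: "Suc N \<le> i" "i \<le> n"
  then have "1 \<le> n" using \<open>1 \<le> N\<close> by simp
  have "(\<exists>t. (ladder n)\<^sup>*\<^sup>* s t \<and> T t) \<longleftrightarrow> (\<exists>t\<le>2*n+1. T t)"
    if s: "s \<in> {0, 1, 2*i, 2*i+1}" for s
  proof
    assume "\<exists>t. (ladder n)\<^sup>*\<^sup>* s t \<and> T t"
    then obtain t where t: "(ladder n)\<^sup>*\<^sup>* s t" "T t" by blast
    have "s \<le> 2*n+1" using s i by auto
    with t show "\<exists>t\<le>2*n+1. T t" using ladder.rtranclp_closed[OF t(1)] by blast
  next
    assume "\<exists>t\<le>2*n+1. T t"
    then obtain t where t: "t \<le> 2*n+1" "T t" by blast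
    show "\<exists>t. (ladder n)\<^sup>*\<^sup>* s t \<and> T t"
    proof (cases "s \<le> 1")
      case True
      then show ?thesis using ladder_reach_from_bottom[OF \<open>1 \<le> n\<close> True t(1)] t(2) by blast
    next
      case False
      obtain t' where t': "(ladder n)\<^sup>*\<^sup>* (2*i+1) t'" "T t' = T t"
        using agrees_above_reach_representative[OF T \<open>1 \<le> N\<close> _ \<open>i \<le> n\<close> t(1)] i by auto
      have "s = 2*i \<or> s = 2*i+1" using s False by auto
      then have "(ladder n)\<^sup>*\<^sup>* s (2*i+1)"
        using ladder_even[of "2*i" n "2*i+1"] by auto
      with t' t(2) show ?thesis by (meson rtranclp_trans)
    qed
  qed
  then show "(\<exists>t. (ladder n)\<^sup>*\<^sup>* (2*i) t \<and> T t) = (\<exists>t. (ladder n)\<^sup>*\<^sup>* 0 t \<and> T t) \<and>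
      (\<exists>t. (ladder n)\<^sup>*\<^sup>* (2*i+1) t \<and> T t) = (\<exists>t. (ladder n)\<^sup>*\<^sup>* 1 t \<and> T t)"
    by simp
qed

lemma agrees_above_EG:
  "agrees_above N n T \<Longrightarrow> agrees_above N n (\<lambda>s. T s \<and> T (if even s then Suc s else s))"
  by (simp add: agrees_above_def)

lemma ladder_stable_successor:
  assumes "ladder_stable T"
    and succ: "\<And>N n. agrees_above N n (T n) \<Longrightarrow> 1 \<le> N \<Longrightarrow> agrees_above (Suc N) n (T' n)"
  shows "ladder_stable T'"
proof -
  obtain N where "\<forall>n. agrees_above N n (T n)" using assms(1) unfolding ladder_stable_def by blast
  then have "agrees_above (Suc (Suc N)) n (T' n)" for n
    using succ[of "Suc N" n] agrees_above_mono[of N n "T n" "Suc N"] by simp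
  then show ?thesis unfolding ladder_stable_def by blast
qed

lemma ladder_stable_EX: "ladder_stable T \<Longrightarrow> ladder_stable (\<lambda>n s. \<exists>t. ladder n s t \<and> T n t)"
  by (erule ladder_stable_successor) (rule agrees_above_EX)

lemma ladder_stable_EF: "ladder_stable T \<Longrightarrow> ladder_stable (\<lambda>n s. \<exists>t. (ladder n)\<^sup>*\<^sup>* s t \<and> T n t)"
  by (erule ladder_stable_successor) (rule agrees_above_EF)

lemma ladder_stable_EG:
  "ladder_stable T \<Longrightarrow> ladder_stable (\<lambda>n s. T n s \<and> T n (if even s then Suc s else s))"
  unfolding ladder_stable_def using agrees_above_EG by blast

lemma ladder_ex_run_always_iff:
  "(\<exists>\<pi>\<in>ladder.runs n s. \<forall>i. T (\<pi> i)) \<longleftrightarrow> T s \<and> T (if even s then Suc s else s)"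
proof
  assume "\<exists>\<pi>\<in>ladder.runs n s. \<forall>i. T (\<pi> i)"
  then obtain \<pi> where \<pi>: "\<pi> \<in> ladder.runs n s" "\<forall>i. T (\<pi> i)" by blast
  then have "\<pi> 0 = s" "ladder n s (\<pi> 1)" by (auto simp: ladder.runs_def dest: spec[of _ 0])
  with \<pi>(2) show "T s \<and> T (if even s then Suc s else s)"
    by (metis ladder_even)
next
  assume T: "T s \<and> T (if even s then Suc s else s)"
  define \<pi> where "\<pi> k = (if k = 0 then s else if even s then Suc s else s)" for k :: nat
  have "\<pi> \<in> ladder.runs n s"
    by (auto simp: \<pi>_def ladder.runs_def ladder_def)
  moreover have "T (\<pi> i)" for i using T by (simp add: \<pi>_def)
  ultimately show "\<exists>\<pi>\<in>ladder.runs n s. \<forall>i. T (\<pi> i)" by blast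
qed

lemma ladder_all_run_eventually_iff:
  "(\<forall>\<pi>\<in>ladder.runs n s. \<exists>i. T (\<pi> i)) \<longleftrightarrow> T s \<or> T (if even s then Suc s else s)"
  using ladder_ex_run_always_iff[of n s "\<lambda>t. \<not> T t"] by blast

lemma lab_ladder_cgs [simp]: "lab (ladder_cgs n) = (\<lambda>s. if even s then {undefined} else {})"
  unfolding ladder_cgs_def by (rule ladder.choice_cgs_simps)

lemma St_ladder_cgs [simp]: "St (ladder_cgs n) = {..2*n+1}"
  unfolding ladder_cgs_def by (rule ladder.choice_cgs_simps)

lemma is_cgs_ladder_cgs: "is_cgs (ladder_cgs n)"
  unfolding ladder_cgs_def by (rule ladder.is_cgs_choice_cgs)

lemma sat_ladder_cgs_ADia_iff:
  "s \<le> 2*n+1 \<Longrightarrow> sat (ladder_cgs n) s (ADia A \<Phi>) \<longleftrightarrow>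
    (if undefined \<in> A then \<exists>\<pi>\<in>ladder.runs n s. satp (ladder_cgs n) \<pi> \<Phi>
     else \<forall>\<pi>\<in>ladder.runs n s. satp (ladder_cgs n) \<pi> \<Phi>)"
  unfolding ladder_cgs_def by (rule ladder.sat_choice_cgs_ADia_iff)

lemma sat_ladder_cgs_ABox_iff:
  "s \<le> 2*n+1 \<Longrightarrow> sat (ladder_cgs n) s (ABox A \<Phi>) \<longleftrightarrow>
    (if undefined \<in> A then \<forall>\<pi>\<in>ladder.runs n s. satp (ladder_cgs n) \<pi> \<Phi>
     else \<exists>\<pi>\<in>ladder.runs n s. satp (ladder_cgs n) \<pi> \<Phi>)"
  unfolding ladder_cgs_def by (rule ladder.sat_choice_cgs_ABox_iff)

lemma ladder_stable_sat:
  fixes \<chi> :: "('ag, 'ap) asf" and \<Phi> :: "('ag, 'ap) apf"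
  shows "ladder_stable (\<lambda>n s. sat (ladder_cgs n :: ('ag, 'ap) cgs) s \<chi>)
    \<and> ladder_stable (\<lambda>n s. \<exists>\<pi>\<in>ladder.runs n s. satp (ladder_cgs n :: ('ag, 'ap) cgs) \<pi> \<Phi>)
      \<and> ladder_stable (\<lambda>n s. \<forall>\<pi>\<in>ladder.runs n s. satp (ladder_cgs n :: ('ag, 'ap) cgs) \<pi> \<Phi>)"
proof (induction rule: asf_apf.induct)
  case (AProp p)
  show ?case
    by (rule ladder_stable_cong[OF ladder_stable_const[of "\<lambda>e. e \<and> p = undefined"]]) auto
next
  case (ANeg \<phi>)
  then show ?case by (simp add: ladder_stable_Not)
next
  case (AOr \<phi> \<psi>)
  then show ?case using ladder_stable_binop[of _ _ "(\<or>)"] by simp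
next
  case (AAnd \<phi> \<psi>)
  then show ?case using ladder_stable_binop[of _ _ "(\<and>)"] by simp
next
  case (AImp \<phi> \<psi>)
  then show ?case using ladder_stable_binop[of _ _ "(\<longrightarrow>)"] by simp
next
  case (ADia A \<Phi>)
  show ?case
  proof (cases "undefined \<in> A")
    case True
    show ?thesis
      by (rule ladder_stable_cong[OF ADia[THEN conjunct1]])
        (simp add: True sat_ladder_cgs_ADia_iff del: sat.simps)
  next
    case False
    show ?thesis
      by (rule ladder_stable_cong[OF ADia[THEN conjunct2]])
        (simp add: False sat_ladder_cgs_ADia_iff del: sat.simps)
  qed
next
  case (ABox A \<Phi>)
  show ?case
  proof (cases "undefined \<in> A")
    case True
    show ?thesis
      by (rule ladder_stable_cong[OF ABox[THEN conjunct2]])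
        (simp add: True sat_ladder_cgs_ABox_iff del: sat.simps)
  next
    case False
    show ?thesis
      by (rule ladder_stable_cong[OF ABox[THEN conjunct1]])
        (simp add: False sat_ladder_cgs_ABox_iff del: sat.simps)
  qed
next
  case (ANext \<phi>)
  then have T: "ladder_stable (\<lambda>n s. sat (ladder_cgs n) s \<phi>)" by simp
  show ?case
  proof
    show "ladder_stable (\<lambda>n s. \<exists>\<pi>\<in>ladder.runs n s. satp (ladder_cgs n) \<pi> (ANext \<phi>))"
      by (rule ladder_stable_cong[OF ladder_stable_EX[OF T]])
        (simp add: ladder.ex_run_next_iff[of _ _ "\<lambda>t. sat (ladder_cgs _) t \<phi>", simplified])
    show "ladder_stable (\<lambda>n s. \<forall>\<pi>\<in>ladder.runs n s. satp (ladder_cgs n) \<pi> (ANext \<phi>))"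
      by (rule ladder_stable_cong[OF ladder_stable_Not[OF ladder_stable_EX[OF ladder_stable_Not[OF T]]]])
        (simp add: ladder.all_run_next_iff[of _ _ "\<lambda>t. sat (ladder_cgs _) t \<phi>", simplified])
  qed
next
  case (AEv \<phi>)
  then have T: "ladder_stable (\<lambda>n s. sat (ladder_cgs n) s \<phi>)" by simp
  show ?case
  proof
    show "ladder_stable (\<lambda>n s. \<exists>\<pi>\<in>ladder.runs n s. satp (ladder_cgs n) \<pi> (AEv \<phi>))"
      by (rule ladder_stable_cong[OF ladder_stable_EF[OF T]])
        (simp add: ladder.ex_run_eventually_iff[of _ _ "\<lambda>t. sat (ladder_cgs _) t \<phi>"])
    show "ladder_stable (\<lambda>n s. \<forall>\<pi>\<in>ladder.runs n s. satp (ladder_cgs n) \<pi> (AEv \<phi>))"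
      by (rule ladder_stable_cong[OF ladder_stable_Not[OF ladder_stable_EG[OF ladder_stable_Not[OF T]]]])
        (simp add: ladder_all_run_eventually_iff[of _ _ "\<lambda>t. sat (ladder_cgs _) t \<phi>"])
  qed
next
  case (AAlw \<phi>)
  then have T: "ladder_stable (\<lambda>n s. sat (ladder_cgs n) s \<phi>)" by simp
  show ?case
  proof
    show "ladder_stable (\<lambda>n s. \<exists>\<pi>\<in>ladder.runs n s. satp (ladder_cgs n) \<pi> (AAlw \<phi>))"
      by (rule ladder_stable_cong[OF ladder_stable_EG[OF T]])
        (simp add: ladder_ex_run_always_iff[of _ _ "\<lambda>t. sat (ladder_cgs _) t \<phi>"])
    show "ladder_stable (\<lambda>n s. \<forall>\<pi>\<in>ladder.runs n s. satp (ladder_cgs n) \<pi> (AAlw \<phi>))"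
      by (rule ladder_stable_cong[OF ladder_stable_Not[OF ladder_stable_EF[OF ladder_stable_Not[OF T]]]])
        (simp add: ladder.all_run_always_iff[of _ _ "\<lambda>t. sat (ladder_cgs _) t \<phi>"])
  qed
qed

lemma le_from_bits_B0011_iff: "B0011 \<le> from_bits f \<longleftrightarrow> f 1 \<or> f 2 \<or> f 3"
  by (auto simp: from_bits_def less_eq_b4_def)

lemma le_VP_RAlw_B0011_iff:
  "B0011 \<le> VP S \<pi> (RAlw \<phi>) \<longleftrightarrow> (\<forall>i. \<exists>j\<ge>i. bit4 (V S (\<pi> j) \<phi>) 3)"
proof -
  have bit3: "bit4 b k \<Longrightarrow> k \<le> 3 \<Longrightarrow> bit4 b 3" for b k
    by (simp add: bit4_def)
  let ?b = "\<lambda>k j. bit4 (V S (\<pi> j) \<phi>) k"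
  have "(\<forall>i. ?b 1 i) \<or> (\<exists>i. \<forall>j\<ge>i. ?b 2 j) \<or> (\<forall>i. \<exists>j\<ge>i. ?b 3 j) \<longleftrightarrow> (\<forall>i. \<exists>j\<ge>i. ?b 3 j)"
  proof (intro iffI; (elim disjE)?)
    assume "\<forall>i. ?b 1 i"
    then show "\<forall>i. \<exists>j\<ge>i. ?b 3 j" using bit3 by (meson order_refl one_le_numeral)
  next
    assume "\<exists>i. \<forall>j\<ge>i. ?b 2 j"
    then obtain i0 where "\<forall>j\<ge>i0. ?b 2 j" by blast
    then have "?b 2 (max i i0)" for i by simp
    then have "?b 3 (max i i0)" for i by (rule bit3) simp
    then show "\<forall>i. \<exists>j\<ge>i. ?b 3 j" by (meson max.cobounded1)
  qed auto
  then show ?thesis by (simp add: le_from_bits_B0011_iff)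
qed

lemma bit4_V_RProp_3: "bit4 (V S s (RProp p)) 3 \<longleftrightarrow> p \<in> lab S s"
  by (simp add: bit4_def)

lemma undefined_in_lab_ladder_cgs: "undefined \<in> lab (ladder_cgs n) s \<longleftrightarrow> even s"
  by simp

lemma le_V_ladder_cgs_RDia_iff:
  fixes \<Phi> :: "('ag, 'ap) rpf"
  assumes "s \<le> 2*n+1" "undefined \<in> A"
  shows "u \<le> V (ladder_cgs n) s (RDia A \<Phi>) \<longleftrightarrow> (\<exists>\<pi>\<in>ladder.runs n s. u \<le> VP (ladder_cgs n) \<pi> \<Phi>)"
proof -
  let ?S = "ladder_cgs n :: ('ag, 'ap) cgs"
  have "u \<le> V ?S s (RDia A \<Phi>) \<longleftrightarrow> (\<exists>F. strats ?S A F \<and> (\<forall>\<pi>\<in>out ?S s A F. u \<le> VP ?S \<pi> \<Phi>))"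
    using is_cgs_ladder_cgs by (rule le_V_RDia_iff)
  also have "\<dots> \<longleftrightarrow> (\<exists>\<pi>\<in>ladder.runs n s. u \<le> VP (ladder_cgs n) \<pi> \<Phi>)"
    unfolding ladder_cgs_def ladder.ex_strategy_all_out_iff[OF assms(1)] using assms(2) by simp
  finally show ?thesis .
qed

lemma ladder_infinitely_often_even_iff:
  assumes "s \<le> 2*n+1"
  shows "B0011 \<le> V (ladder_cgs n :: ('ag, 'ap) cgs) s (RDia {undefined} (RAlw (RProp undefined)))
    \<longleftrightarrow> (\<exists>\<pi>\<in>ladder.runs n s. \<forall>i. \<exists>j\<ge>i. even (\<pi> j))"
  unfolding le_V_ladder_cgs_RDia_iff[OF assms insertI1] le_VP_RAlw_B0011_iff
    bit4_V_RProp_3 undefined_in_lab_ladder_cgs ..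

lemma ladder_alternating_run: "(\<lambda>k. k mod 2) \<in> ladder.runs n 0"
  by (auto simp: ladder.runs_def ladder_def mod_Suc)

lemma ladder_step_div2:
  assumes "ladder n s t" "2 \<le> s"
  shows "2 \<le> t" "t div 2 \<le> s div 2" "odd s \<Longrightarrow> even t \<Longrightarrow> t div 2 < s div 2"
  using assms by (auto simp: ladder_def elim!: oddE)

text \<open>The index s div 2 never increases along a run from 2 upwards and drops at every
  step from an odd to an even state; since even states are only entered from odd ones,
  they occur only finitely often.\<close>
lemma ladder_run_eventually_odd:
  assumes \<pi>: "\<pi> \<in> ladder.runs n s" and "2 \<le> s"
  shows "\<exists>i. \<forall>j\<ge>i. odd (\<pi> j)"
proof -
  define f where "f k = \<pi> k div 2" for k
  have step: "ladder n (\<pi> k) (\<pi> (Suc k))" for k using \<pi> by (simp add: ladder.runs_def)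
  have ge2: "2 \<le> \<pi> k" for k
  proof (induction k)
    case 0
    then show ?case using \<pi> \<open>2 \<le> s\<close> by (simp add: ladder.runs_def)
  next
    case (Suc k)
    then show ?case by (rule ladder_step_div2(1)[OF step])
  qed
  have f_Suc: "f (Suc k) \<le> f k" for k
    unfolding f_def by (rule ladder_step_div2(2)[OF step ge2])
  obtain i where i: "\<forall>j. f i \<le> f j" using ex_has_least_nat[of "\<lambda>_. True" 0 f] by blast
  have odd_Suc: "odd (\<pi> (Suc j))" if "i \<le> j" for j
  proof (rule ccontr)
    assume even: "\<not> odd (\<pi> (Suc j))"
    then have "odd (\<pi> j)" using step[of j] by (auto simp: ladder_even)
    then have "f (Suc j) < f j" unfolding f_def using even ladder_step_div2(3)[OF step ge2] by simp
    also have "f j \<le> f i" by (rule lift_Suc_antimono_le[of f, OF f_Suc that])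
    finally show False using i by (simp add: leD)
  qed
  have "odd (\<pi> j)" if "Suc i \<le> j" for j
    using odd_Suc[of "j - 1"] that by simp
  then show ?thesis by blast
qed

lemma ATL_inexpressible_infinitely_often:
  fixes \<chi> :: "('ag, 'ap) asf"
  shows "\<not> (\<forall>(S :: ('ag, 'ap) cgs) s. is_cgs S \<longrightarrow> s \<in> St S \<longrightarrow>
    (sat S s \<chi> \<longleftrightarrow> B0011 \<le> V S s (RDia {undefined} (RAlw (RProp undefined)))))"
proof
  assume \<chi>: "\<forall>(S :: ('ag, 'ap) cgs) s. is_cgs S \<longrightarrow> s \<in> St S \<longrightarrow>
    (sat S s \<chi> \<longleftrightarrow> B0011 \<le> V S s (RDia {undefined} (RAlw (RProp undefined))))"
  obtain N where N: "agrees_above N n (\<lambda>s. sat (ladder_cgs n :: ('ag, 'ap) cgs) s \<chi>)" for n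
    using ladder_stable_sat[of \<chi>] unfolding ladder_stable_def by blast
  define n where "n = Suc N"
  let ?S = "ladder_cgs n :: ('ag, 'ap) cgs"
  have sat_iff: "sat ?S s \<chi> \<longleftrightarrow> (\<exists>\<pi>\<in>ladder.runs n s. \<forall>i. \<exists>j\<ge>i. even (\<pi> j))"
    if "s \<le> 2*n+1" for s
  proof -
    have "s \<in> St ?S" using that by simp
    with \<chi> is_cgs_ladder_cgs
    have "sat ?S s \<chi> \<longleftrightarrow> B0011 \<le> V ?S s (RDia {undefined} (RAlw (RProp undefined)))"
      by blast
    also have "\<dots> \<longleftrightarrow> (\<exists>\<pi>\<in>ladder.runs n s. \<forall>i. \<exists>j\<ge>i. even (\<pi> j))"
      by (rule ladder_infinitely_often_even_iff[OF that])
    finally show ?thesis .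
  qed
  have "N \<le> n" by (simp add: n_def)
  then have same: "sat ?S (2*n) \<chi> \<longleftrightarrow> sat ?S 0 \<chi>"
    using N[of n] unfolding agrees_above_def by blast
  have "\<exists>\<pi>\<in>ladder.runs n 0. \<forall>i. \<exists>j\<ge>i. even (\<pi> j)"
  proof (rule bexI[OF _ ladder_alternating_run], intro allI)
    show "\<exists>j\<ge>i. even (j mod 2)" for i :: nat
      by (rule exI[of _ "2*i"]) simp
  qed
  then have at_0: "sat ?S 0 \<chi>"
    using sat_iff[OF le0] by blast
  have "\<not> (\<forall>i. \<exists>j\<ge>i. even (\<pi> j))" if "\<pi> \<in> ladder.runs n (2*n)" for \<pi>
    using ladder_run_eventually_odd[OF that] by (auto simp: n_def)
  then have at_top: "\<not> sat ?S (2*n) \<chi>"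
    using sat_iff[of "2*n"] by auto
  from same at_0 at_top show False by blast
qed

theorem theorem3:
  shows "(\<forall>\<phi> :: ('ag, 'ap::finite) asf. \<exists>\<phi>' :: ('ag, 'ap) rsf.
            \<forall>(S :: ('ag, 'ap) cgs) s. is_cgs S \<longrightarrow> s \<in> St S \<longrightarrow>
              (V S s \<phi>' = B1111 \<longleftrightarrow> sat S s \<phi>))
       \<and> (\<exists>(\<psi> :: ('ag, 'ap) rsf) (u :: b4). \<not> (\<exists>\<chi> :: ('ag, 'ap) asf.
            \<forall>(S :: ('ag, 'ap) cgs) s. is_cgs S \<longrightarrow> s \<in> St S \<longrightarrow>
              (sat S s \<chi> \<longleftrightarrow> u \<le> V S s \<psi>)))"
proof
  show "\<forall>\<phi> :: ('ag, 'ap) asf. \<exists>\<phi>' :: ('ag, 'ap) rsf.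
      \<forall>(S :: ('ag, 'ap) cgs) s. is_cgs S \<longrightarrow> s \<in> St S \<longrightarrow> (V S s \<phi>' = B1111 \<longleftrightarrow> sat S s \<phi>)"
    using tr_trp_correct by blast
  show "\<exists>(\<psi> :: ('ag, 'ap) rsf) (u :: b4). \<not> (\<exists>\<chi> :: ('ag, 'ap) asf.
      \<forall>(S :: ('ag, 'ap) cgs) s. is_cgs S \<longrightarrow> s \<in> St S \<longrightarrow> (sat S s \<chi> \<longleftrightarrow> u \<le> V S s \<psi>))"
    using ATL_inexpressible_infinitely_often by blast
qed

end
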